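(* Let $\mathcal R$ be a finite set of NME rules and $C$ a local chase criterion. If $\mathrm{pos}(\mathcal R)$ is $C$-finite, then $\mathcal R$ is $C$-stable-finite.
   Context: NME rule: $R=(B^+,\mathbf{not}\,B^-_1,\dots,\mathbf{not}\,B^-_k\to H)$, atomsets with $\mathrm{vars}(B^-_i)\subseteq\mathrm{vars}(B^+)$; $\mathrm{pos}(R)=B^+\to H$, $\mathrm{pos}(\mathcal R)=\{\mathrm{pos}(R)\}$. A $C$-chase applies rules breadth-first, $F_i=\alpha(\sigma_{i-1}(F_{i-1}),R,\pi)$ with $\alpha(F,R,\pi)=F\cup\pi(\mathrm{safe}(H))$, $\sigma_i$ an endomorphism chosen by criterion $C$. $C$ is local if $\sigma_i(F_i)\subseteq\sigma_j(F_j)$ for all $i\le j$ (oblivious, skolem, frontier, restricted chases are local; the core chase is not). A set of existential rules is $C$-finite if the $C$-chase halts (yields a finite complete derivation) on every atomset $F$. $C$-derivation tree of $(F,\mathcal R)$: nodes labelled $(\mathrm{IN},\mathrm{OUT},\mathrm{MBT})$ (inferred atomset, set of forbidden atomsets, atomsets that must be proven); root $(\sigma_0(F),\emptyset,\emptyset)$. A node is unsound if some atomset of OUT is included in IN or in MBT. For a childless non-unsound node $N$ and a rule $R$ with homomorphism $\pi:B^+\to\mathrm{IN}(N)$, if the application is not blocked and the $C$-chase step along the positive nodes from the root, $S=\sigma(\alpha(\mathrm{IN}(N),\mathrm{pos}(R),\pi))$, is not included in $\mathrm{IN}(N)$, add children $N^+$ labelled $(S,\mathrm{OUT}\cup\{\pi(B^-_1),\dots,\pi(B^-_k)\},\mathrm{MBT})$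 and $N^-_i$ labelled $(\mathrm{IN},\mathrm{OUT},\mathrm{MBT}\cup\{\pi(B^-_i)\})$. A branch is unsound if it contains an unsound node; a sound branch is complete if its associated derivation is complete (no further non-blocked application changes the result); a sound complete branch is stable if every atomset in MBT of a node later appears in IN of a descendant; a branch is unprovable if some node has an atomset in MBT such that no complete branch through that node is stable. A $C$-chase tree is a $C$-derivation tree all of whose branches are unsound, unprovable or complete. $\mathcal R$ is $C$-stable-finite if for every atomset $F$ there is a finite $C$-chase tree of $(F,\mathcal R)$. *)

theory Defs
  imports Main "HOL-Library.Infinite_Typeclass"
begin

datatype ('c, 'v) trm = Var 'v | Cst 'c

type_synonym ('p, 'c, 'v) atom = "'p \<times> ('c, 'v) trm list"
type_synonym ('p, 'c, 'v) atomset = "('p, 'c, 'v) atom set"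
type_synonym ('c, 'v) subst = "'v \<Rightarrow> ('c, 'v) trm"

fun tvars :: "('c, 'v) trm \<Rightarrow> 'v set" where
  "tvars (Var x) = {x}"
| "tvars (Cst c) = {}"

definition avars :: "('p, 'c, 'v) atom \<Rightarrow> 'v set" where
  "avars a = \<Union> (tvars ` set (snd a))"

definition vars :: "('p, 'c, 'v) atomset \<Rightarrow> 'v set" where
  "vars A = \<Union> (avars ` A)"

fun tsubst :: "('c, 'v) subst \<Rightarrow> ('c, 'v) trm \<Rightarrow> ('c, 'v) trm" where
  "tsubst s (Var x) = s x"
| "tsubst s (Cst c) = Cst c"

definition asubst :: "('c, 'v) subst \<Rightarrow> ('p, 'c, 'v) atom \<Rightarrow> ('p, 'c, 'v) atom" where
  "asubst s a = (fst a, map (tsubst s) (snd a))"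

definition sapply :: "('c, 'v) subst \<Rightarrow> ('p, 'c, 'v) atomset \<Rightarrow> ('p, 'c, 'v) atomset" where
  "sapply s A = asubst s ` A"

text \<open>Homomorphisms from A to B, represented canonically as substitutions that are
  the identity outside vars(A) (i.e. maps vars(A) -> terms).\<close>
definition homs :: "('p, 'c, 'v) atomset \<Rightarrow> ('p, 'c, 'v) atomset \<Rightarrow> ('c, 'v) subst set" where
  "homs A B = {\<pi>. sapply \<pi> A \<subseteq> B \<and> (\<forall>x. x \<notin> vars A \<longrightarrow> \<pi> x = Var x)}"

record ('p, 'c, 'v) nme_rule =
  bpos :: "('p, 'c, 'v) atomset"
  bneg :: "('p, 'c, 'v) atomset list"
  head :: "('p, 'c, 'v) atomset"

definition nme_rule :: "('p, 'c, 'v) nme_rule \<Rightarrow> bool" where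
  "nme_rule R \<longleftrightarrow> finite (bpos R) \<and> finite (head R) \<and>
     (\<forall>B\<in>set (bneg R). finite B \<and> vars B \<subseteq> vars (bpos R))"

definition pos :: "('p, 'c, 'v) nme_rule \<Rightarrow> ('p, 'c, 'v) nme_rule" where
  "pos R = R\<lparr>bneg := []\<rparr>"

definition exist_rule :: "('p, 'c, 'v) nme_rule \<Rightarrow> bool" where
  "exist_rule R \<longleftrightarrow> nme_rule R \<and> bneg R = []"

definition exvars :: "('p, 'c, 'v) nme_rule \<Rightarrow> 'v set" where
  "exvars R = vars (head R) - vars (bpos R)"

text \<open>alpha(F,R,pi) = F \<union> pi(safe(H)): existential variables are renamed injectively
  into variables that are fresh for F (a fixed choice, via Hilbert choice).\<close>
definition alpha :: "('p, 'c, 'v) atomset \<Rightarrow> ('p, 'c, 'v) nme_rule \<Rightarrow> ('c, 'v) subst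
    \<Rightarrow> ('p, 'c, 'v) atomset" where
  "alpha F R \<pi> = F \<union> sapply (SOME \<pi>'. (\<forall>x\<in>vars (bpos R). \<pi>' x = \<pi> x) \<and> inj_on \<pi>' (exvars R) \<and>
       (\<forall>x\<in>exvars R. \<exists>y. \<pi>' x = Var y \<and> y \<notin> vars F)) (head R)"

type_synonym ('p, 'c, 'v) trigger = "('p, 'c, 'v) nme_rule \<times> ('c, 'v) subst"

text \<open>An (abstract) chase criterion C: given the initial atomset F and the list of
  triggers applied so far (chronological), it chooses the endomorphism sigma_i, and
  it decides whether the application of a further trigger is blocked.\<close>
record ('p, 'c, 'v) criterion =
  csig :: "('p, 'c, 'v) atomset \<Rightarrow> ('p, 'c, 'v) trigger list \<Rightarrow> ('c, 'v) subst"
  cblk :: "('p, 'c, 'v) atomset \<Rightarrow> ('p, 'c, 'v) trigger list \<Rightarrow> ('p, 'c, 'v) trigger \<Rightarrow> bool"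

text \<open>st C F (reversed trigger list) = sigma_i(F_i).\<close>
fun st :: "('p, 'c, 'v) criterion \<Rightarrow> ('p, 'c, 'v) atomset \<Rightarrow> ('p, 'c, 'v) trigger list
    \<Rightarrow> ('p, 'c, 'v) atomset" where
  "st C F [] = sapply (csig C F []) F"
| "st C F (t # rs) = sapply (csig C F (rev (t # rs))) (alpha (st C F rs) (fst t) (snd t))"

definition state :: "('p, 'c, 'v) criterion \<Rightarrow> ('p, 'c, 'v) atomset \<Rightarrow> ('p, 'c, 'v) trigger list
    \<Rightarrow> ('p, 'c, 'v) atomset" where
  "state C F ts = st C F (rev ts)"

text \<open>F_i (before applying sigma_i).\<close>
definition pre_state :: "('p, 'c, 'v) criterion \<Rightarrow> ('p, 'c, 'v) atomset \<Rightarrow> ('p, 'c, 'v) trigger list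
    \<Rightarrow> ('p, 'c, 'v) atomset" where
  "pre_state C F ts = (case rev ts of [] \<Rightarrow> F | t # rs \<Rightarrow> alpha (st C F rs) (fst t) (snd t))"

definition cder :: "('p, 'c, 'v) criterion \<Rightarrow> ('p, 'c, 'v) atomset \<Rightarrow> ('p, 'c, 'v) trigger list \<Rightarrow> bool" where
  "cder C F ts \<longleftrightarrow> (\<forall>i<length ts. exist_rule (fst (ts ! i)) \<and>
      snd (ts ! i) \<in> homs (bpos (fst (ts ! i))) (state C F (take i ts)) \<and>
      \<not> cblk C F (take i ts) (ts ! i))"

definition chase_criterion :: "('p, 'c, 'v) criterion \<Rightarrow> bool" where
  "chase_criterion C \<longleftrightarrow> (\<forall>F ts. finite F \<and> cder C F ts \<longrightarrow>
      sapply (csig C F ts) (pre_state C F ts) \<subseteq> pre_state C F ts)"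

definition local_crit :: "('p, 'c, 'v) criterion \<Rightarrow> bool" where
  "local_crit C \<longleftrightarrow> (\<forall>F ts i j. finite F \<and> cder C F ts \<and> i \<le> j \<and> j \<le> length ts \<longrightarrow>
      state C F (take i ts) \<subseteq> state C F (take j ts))"

definition cands :: "('p, 'c, 'v) nme_rule set \<Rightarrow> ('p, 'c, 'v) atomset \<Rightarrow> ('p, 'c, 'v) trigger set" where
  "cands S G = {(R, \<pi>) | R \<pi>. R \<in> S \<and> \<pi> \<in> homs (bpos R) G}"

text \<open>Processing one breadth-first round: the triggers on the atomset at the start of the
  round are considered in the given order; each is applied if it is not blocked and
  changes the current result.\<close>
fun proc :: "('p, 'c, 'v) criterion \<Rightarrow> ('p, 'c, 'v) atomset \<Rightarrow> ('p, 'c, 'v) trigger list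
    \<Rightarrow> ('p, 'c, 'v) trigger list \<Rightarrow> ('p, 'c, 'v) trigger list" where
  "proc C F h [] = h"
| "proc C F h (c # cs) = proc C F
     (if \<not> cblk C F h c \<and> \<not> state C F (h @ [c]) \<subseteq> state C F h then h @ [c] else h) cs"

definition chase_run :: "('p, 'c, 'v) criterion \<Rightarrow> ('p, 'c, 'v) nme_rule set \<Rightarrow> ('p, 'c, 'v) atomset
    \<Rightarrow> (nat \<Rightarrow> ('p, 'c, 'v) trigger list) \<Rightarrow> bool" where
  "chase_run C S F h \<longleftrightarrow> h 0 = [] \<and>
     (\<forall>k. \<exists>cs. distinct cs \<and> set cs = cands S (state C F (h k)) \<and> h (Suc k) = proc C F (h k) cs)"

definition chase_halts :: "('p, 'c, 'v) criterion \<Rightarrow> ('p, 'c, 'v) nme_rule set \<Rightarrow> ('p, 'c, 'v) atomset \<Rightarrow> bool" where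
  "chase_halts C S F \<longleftrightarrow> (\<forall>h. chase_run C S F h \<longrightarrow> (\<exists>k. h (Suc k) = h k))"

definition C_finite :: "('p, 'c, 'v) criterion \<Rightarrow> ('p, 'c, 'v) nme_rule set \<Rightarrow> bool" where
  "C_finite C S \<longleftrightarrow> (\<forall>F. finite F \<longrightarrow> chase_halts C S F)"

record ('p, 'c, 'v) nlab =
  IN   :: "('p, 'c, 'v) atomset"
  OUT  :: "('p, 'c, 'v) atomset set"
  MBT  :: "('p, 'c, 'v) atomset set"
  hist :: "('p, 'c, 'v) trigger list"   \<comment> \<open>triggers (pos R, pi) along positive edges from the root\<close>

text \<open>A node is a leaf, or an inner node expanded with rule R and homomorphism pi; its
  children are [N+, N-_1, ..., N-_k].\<close>
datatype ('p, 'c, 'v) dtree = Leaf | Inner "('p, 'c, 'v) nme_rule" "('c, 'v) subst" "('p, 'c, 'v) dtree list"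

definition root_lab :: "('p, 'c, 'v) criterion \<Rightarrow> ('p, 'c, 'v) atomset \<Rightarrow> ('p, 'c, 'v) nlab" where
  "root_lab C F = \<lparr>IN = state C F [], OUT = {}, MBT = {}, hist = []\<rparr>"

fun child_lab :: "('p, 'c, 'v) criterion \<Rightarrow> ('p, 'c, 'v) atomset \<Rightarrow> ('p, 'c, 'v) nlab
    \<Rightarrow> ('p, 'c, 'v) nme_rule \<Rightarrow> ('c, 'v) subst \<Rightarrow> nat \<Rightarrow> ('p, 'c, 'v) nlab" where
  "child_lab C F l R \<pi> 0 =
     \<lparr>IN = state C F (hist l @ [(pos R, \<pi>)]),
      OUT = OUT l \<union> set (map (sapply \<pi>) (bneg R)),
      MBT = MBT l,
      hist = hist l @ [(pos R, \<pi>)]\<rparr>"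
| "child_lab C F l R \<pi> (Suc i) = l\<lparr>MBT := MBT l \<union> {sapply \<pi> (bneg R ! i)}\<rparr>"

primrec subt :: "('p, 'c, 'v) dtree \<Rightarrow> nat list \<Rightarrow> ('p, 'c, 'v) dtree option" where
  "subt t [] = Some t"
| "subt t (i # a) = (case t of Leaf \<Rightarrow> None
     | Inner R \<pi> cs \<Rightarrow> if i < length cs then subt (cs ! i) a else None)"

primrec labs :: "('p, 'c, 'v) criterion \<Rightarrow> ('p, 'c, 'v) atomset \<Rightarrow> ('p, 'c, 'v) nlab
    \<Rightarrow> ('p, 'c, 'v) dtree \<Rightarrow> nat list \<Rightarrow> ('p, 'c, 'v) nlab list" where
  "labs C F l t [] = [l]"
| "labs C F l t (i # a) = l # (case t of Leaf \<Rightarrow> []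
     | Inner R \<pi> cs \<Rightarrow> labs C F (child_lab C F l R \<pi> i) (cs ! i) a)"

definition lab_at :: "('p, 'c, 'v) criterion \<Rightarrow> ('p, 'c, 'v) atomset \<Rightarrow> ('p, 'c, 'v) dtree
    \<Rightarrow> nat list \<Rightarrow> ('p, 'c, 'v) nlab" where
  "lab_at C F t a = last (labs C F (root_lab C F) t a)"

definition leaves :: "('p, 'c, 'v) dtree \<Rightarrow> nat list set" where
  "leaves t = {a. subt t a = Some Leaf}"

definition unsound :: "('p, 'c, 'v) nlab \<Rightarrow> bool" where
  "unsound l \<longleftrightarrow> (\<exists>B\<in>OUT l. B \<subseteq> IN l \<or> (\<exists>m\<in>MBT l. B \<subseteq> m))"

definition wf_dtree :: "('p, 'c, 'v) criterion \<Rightarrow> ('p, 'c, 'v) nme_rule set \<Rightarrow> ('p, 'c, 'v) atomset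
    \<Rightarrow> ('p, 'c, 'v) dtree \<Rightarrow> bool" where
  "wf_dtree C Rs F t \<longleftrightarrow> (\<forall>a R \<pi> cs. subt t a = Some (Inner R \<pi> cs) \<longrightarrow>
     (let l = lab_at C F t a in
        R \<in> Rs \<and> \<pi> \<in> homs (bpos R) (IN l) \<and> \<not> unsound l \<and>
        \<not> cblk C F (hist l) (pos R, \<pi>) \<and>
        \<not> state C F (hist l @ [(pos R, \<pi>)]) \<subseteq> IN l \<and>
        length cs = Suc (length (bneg R))))"

definition unsound_br :: "('p, 'c, 'v) criterion \<Rightarrow> ('p, 'c, 'v) atomset \<Rightarrow> ('p, 'c, 'v) dtree
    \<Rightarrow> nat list \<Rightarrow> bool" where
  "unsound_br C F t a \<longleftrightarrow> (\<exists>j\<le>length a. unsound (lab_at C F t (take j a)))"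

definition complete_der :: "('p, 'c, 'v) criterion \<Rightarrow> ('p, 'c, 'v) nme_rule set \<Rightarrow> ('p, 'c, 'v) atomset
    \<Rightarrow> ('p, 'c, 'v) trigger list \<Rightarrow> bool" where
  "complete_der C Rs F ts \<longleftrightarrow> (\<forall>R\<in>Rs. \<forall>\<pi>\<in>homs (bpos R) (state C F ts).
     \<not> cblk C F ts (pos R, \<pi>) \<longrightarrow> state C F (ts @ [(pos R, \<pi>)]) \<subseteq> state C F ts)"

definition complete_br :: "('p, 'c, 'v) criterion \<Rightarrow> ('p, 'c, 'v) nme_rule set \<Rightarrow> ('p, 'c, 'v) atomset
    \<Rightarrow> ('p, 'c, 'v) dtree \<Rightarrow> nat list \<Rightarrow> bool" where
  "complete_br C Rs F t a \<longleftrightarrow> \<not> unsound_br C F t a \<and> complete_der C Rs F (hist (lab_at C F t a))"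

definition stable_br :: "('p, 'c, 'v) criterion \<Rightarrow> ('p, 'c, 'v) nme_rule set \<Rightarrow> ('p, 'c, 'v) atomset
    \<Rightarrow> ('p, 'c, 'v) dtree \<Rightarrow> nat list \<Rightarrow> bool" where
  "stable_br C Rs F t a \<longleftrightarrow> complete_br C Rs F t a \<and>
     (\<forall>j\<le>length a. \<forall>m\<in>MBT (lab_at C F t (take j a)).
        \<exists>j'. j \<le> j' \<and> j' \<le> length a \<and> m \<subseteq> IN (lab_at C F t (take j' a)))"

definition unprovable_br :: "('p, 'c, 'v) criterion \<Rightarrow> ('p, 'c, 'v) nme_rule set \<Rightarrow> ('p, 'c, 'v) atomset
    \<Rightarrow> ('p, 'c, 'v) dtree \<Rightarrow> nat list \<Rightarrow> bool" where
  "unprovable_br C Rs F t a \<longleftrightarrow> (\<exists>j\<le>length a. \<exists>m\<in>MBT (lab_at C F t (take j a)).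
     \<not> (\<exists>b\<in>leaves t. j \<le> length b \<and> take j b = take j a \<and>
           complete_br C Rs F t b \<and> stable_br C Rs F t b))"

definition chase_tree :: "('p, 'c, 'v) criterion \<Rightarrow> ('p, 'c, 'v) nme_rule set \<Rightarrow> ('p, 'c, 'v) atomset
    \<Rightarrow> ('p, 'c, 'v) dtree \<Rightarrow> bool" where
  "chase_tree C Rs F t \<longleftrightarrow> wf_dtree C Rs F t \<and>
     (\<forall>a\<in>leaves t. unsound_br C F t a \<or> unprovable_br C Rs F t a \<or> complete_br C Rs F t a)"

text \<open>Trees of the inductive datatype dtree are finite.\<close>
definition C_stable_finite :: "('p, 'c, 'v) criterion \<Rightarrow> ('p, 'c, 'v) nme_rule set \<Rightarrow> bool" where
  "C_stable_finite C Rs \<longleftrightarrow> (\<forall>F. finite F \<longrightarrow> (\<exists>t. chase_tree C Rs F t))"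

end

theory Submission
  imports Defs "HOL-Library.FuncSet"
begin

(* Run the breadth-first C-chase with pos(R) on F. By C-finiteness it halts, and the run it
   produces is a derivation whose every step is a genuine (unblocked, state-changing) application
   and after which every unblocked trigger is redundant. Locality is what makes the steps genuine:
   a trigger found at the start of a round still maps into the state when it is applied later in
   the round. Following this derivation through the positive children, and stopping at the first
   unsound node, gives a finite derivation tree. Its positive leaf is unsound or complete. Every
   negative child is a leaf carrying a must-be-true obligation; since the only branch through a
   leaf is the leaf itself, such a branch is complete or unprovable. *)

section \<open>Rules, homomorphisms and finiteness\<close>

lemma pos_simps [simp]: "bpos (pos R) = bpos R" "head (pos R) = head R" "bneg (pos R) = []"
  by (simp_all add: pos_def)

lemma exist_rule_pos: "nme_rule R \<Longrightarrow> exist_rule (pos R)"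
  by (simp add: exist_rule_def nme_rule_def vars_def)

lemma finite_tvars: "finite (tvars t)"
  by (cases t) auto

lemma finite_vars: "finite A \<Longrightarrow> finite (vars A)"
  by (simp add: vars_def avars_def finite_tvars)

lemma homs_mono: "B \<subseteq> B' \<Longrightarrow> homs A B \<subseteq> homs A B'"
  unfolding homs_def by auto

lemma hom_var_in_terms:
  assumes "\<pi> \<in> homs A B" "x \<in> vars A"
  shows "\<pi> x \<in> (\<Union>b\<in>B. set (snd b))"
proof -
  obtain a t where a: "a \<in> A" "t \<in> set (snd a)" "x \<in> tvars t"
    using assms(2) unfolding vars_def avars_def by auto
  then have "t = Var x" by (cases t) auto
  then have "\<pi> x \<in> set (snd (asubst \<pi> a))"
    using a(2) unfolding asubst_def by force
  moreover have "asubst \<pi> a \<in> B"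
    using assms(1) a(1) unfolding homs_def sapply_def by auto
  ultimately show ?thesis by blast
qed

lemma finite_homs:
  fixes A B :: "('p, 'c, 'v) atomset"
  assumes "finite A" "finite B"
  shows "finite (homs A B)"
proof -
  define T where "T = (\<Union>b\<in>B. set (snd b))"
  define ext :: "('v \<Rightarrow> ('c, 'v) trm) \<Rightarrow> ('c, 'v) subst"
    where "ext f = (\<lambda>x. if x \<in> vars A then f x else Var x)" for f
  have "homs A B \<subseteq> ext ` (vars A \<rightarrow>\<^sub>E T)"
  proof
    fix \<pi> assume \<pi>: "\<pi> \<in> homs A B"
    have "\<pi> = ext (restrict \<pi> (vars A))"
      using \<pi> by (auto simp: ext_def homs_def)
    moreover have "restrict \<pi> (vars A) \<in> vars A \<rightarrow>\<^sub>E T"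
      using hom_var_in_terms[OF \<pi>] by (auto simp: T_def)
    ultimately show "\<pi> \<in> ext ` (vars A \<rightarrow>\<^sub>E T)" by blast
  qed
  moreover have "finite (vars A \<rightarrow>\<^sub>E T)"
    using assms by (simp add: finite_PiE finite_vars T_def)
  ultimately show ?thesis
    using finite_subset by blast
qed

lemma finite_cands:
  assumes "finite S" "\<forall>R\<in>S. finite (bpos R)" "finite G"
  shows "finite (cands S G)"
proof -
  have "cands S G = (\<Union>R\<in>S. Pair R ` homs (bpos R) G)"
    unfolding cands_def by auto
  then show ?thesis
    using assms by (auto intro!: finite_homs)
qed

lemma finite_state:
  assumes "finite F" "\<forall>c\<in>set ts. finite (head (fst c))"
  shows "finite (state C F ts)"
proof -
  have "finite (st C F rs)" if "\<forall>c\<in>set rs. finite (head (fst c))" for rs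
    using that by (induction rs) (auto simp: sapply_def alpha_def assms(1))
  then show ?thesis
    using assms(2) by (simp add: state_def)
qed

section \<open>Productive derivations and the breadth-first chase\<close>

(* Exactly the conditions under which a node of a C-derivation tree is expanded. *)
definition productive_trigger :: "('p, 'c, 'v) criterion \<Rightarrow> ('p, 'c, 'v) nme_rule set
    \<Rightarrow> ('p, 'c, 'v) atomset \<Rightarrow> ('p, 'c, 'v) trigger list \<Rightarrow> ('p, 'c, 'v) trigger \<Rightarrow> bool" where
  "productive_trigger C S F ts c \<longleftrightarrow> fst c \<in> S \<and> snd c \<in> homs (bpos (fst c)) (state C F ts) \<and>
     \<not> cblk C F ts c \<and> \<not> state C F (ts @ [c]) \<subseteq> state C F ts"

definition productive_der :: "('p, 'c, 'v) criterion \<Rightarrow> ('p, 'c, 'v) nme_rule set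
    \<Rightarrow> ('p, 'c, 'v) atomset \<Rightarrow> ('p, 'c, 'v) trigger list \<Rightarrow> bool" where
  "productive_der C S F ts \<longleftrightarrow> (\<forall>i<length ts. productive_trigger C S F (take i ts) (ts ! i))"

lemma productive_der_Nil [simp]: "productive_der C S F []"
  by (simp add: productive_der_def)

lemma productive_der_snoc:
  "productive_der C S F (ts @ [c]) \<longleftrightarrow> productive_der C S F ts \<and> productive_trigger C S F ts c"
  by (auto simp: productive_der_def nth_append less_Suc_eq)

lemma productive_der_take: "productive_der C S F ts \<Longrightarrow> productive_der C S F (take n ts)"
  by (simp add: productive_der_def min_less_iff_conj)

lemma productive_der_rules: "productive_der C S F ts \<Longrightarrow> fst ` set ts \<subseteq> S"
  unfolding productive_der_def productive_trigger_def by (metis image_subsetI in_set_conv_nth)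

lemma productive_der_cder:
  assumes "\<forall>R\<in>S. exist_rule R" "productive_der C S F ts"
  shows "cder C F ts"
  using assms by (auto simp: cder_def productive_der_def productive_trigger_def)

lemma finite_state_productive_der:
  assumes "finite F" "\<forall>R\<in>S. exist_rule R" "productive_der C S F ts"
  shows "finite (state C F ts)"
  using assms productive_der_rules[OF assms(3)]
  by (intro finite_state) (auto simp: exist_rule_def nme_rule_def)

lemma state_mono_productive_der:
  assumes "local_crit C" "finite F" "\<forall>R\<in>S. exist_rule R" "productive_der C S F (h @ w)"
  shows "state C F h \<subseteq> state C F (h @ w)"
proof -
  have "cder C F (h @ w)"
    using productive_der_cder[OF assms(3,4)] .
  then show ?thesis
    using assms(1)[unfolded local_crit_def, rule_format, of F "h @ w" "length h" "length (h @ w)"]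
      assms(2) by simp
qed

lemma proc_extends: "\<exists>w. proc C F h cs = h @ w"
proof (induction cs arbitrary: h)
  case (Cons c cs)
  then show ?case by simp (metis append.assoc)
qed simp

lemma proc_idle_redundant:
  assumes "proc C F h cs = h" "c \<in> set cs"
  shows "cblk C F h c \<or> state C F (h @ [c]) \<subseteq> state C F h"
  using assms
proof (induction cs arbitrary: h)
  case (Cons d cs)
  show ?case
  proof (cases "\<not> cblk C F h d \<and> \<not> state C F (h @ [d]) \<subseteq> state C F h")
    case True
    then have "proc C F (h @ [d]) cs = h"
      using Cons.prems(1) by simp
    moreover obtain w where "proc C F (h @ [d]) cs = h @ [d] @ w"
      using proc_extends by (metis append.assoc)
    ultimately show ?thesis by simp
  next
    case False
    then show ?thesis
      using Cons by (cases "c = d") (auto simp del: de_Morgan_conj)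
  qed
qed simp

lemma productive_der_proc:
  assumes "local_crit C" "finite F" "\<forall>R\<in>S. exist_rule R"
  shows "productive_der C S F (h @ w) \<Longrightarrow> set cs \<subseteq> cands S (state C F h) \<Longrightarrow>
    productive_der C S F (proc C F (h @ w) cs)"
proof (induction cs arbitrary: w)
  case (Cons c cs)
  show ?case
  proof (cases "\<not> cblk C F (h @ w) c \<and> \<not> state C F ((h @ w) @ [c]) \<subseteq> state C F (h @ w)")
    case True
    have "state C F h \<subseteq> state C F (h @ w)"
      using state_mono_productive_der[OF assms Cons.prems(1)] .
    moreover have "fst c \<in> S" "snd c \<in> homs (bpos (fst c)) (state C F h)"
      using Cons.prems(2) by (auto simp: cands_def)
    ultimately have "productive_trigger C S F (h @ w) c"
      using True homs_mono unfolding productive_trigger_def by blast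
    then have "productive_der C S F (h @ (w @ [c]))"
      using Cons.prems(1) productive_der_snoc[of C S F "h @ w"] by simp
    moreover have "proc C F (h @ w) (c # cs) = proc C F (h @ (w @ [c])) cs"
      using True by simp
    ultimately show ?thesis
      using Cons.IH[of "w @ [c]"] Cons.prems(2) by simp
  next
    case False
    then have "proc C F (h @ w) (c # cs) = proc C F (h @ w) cs"
      by (simp only: proc.simps if_False)
    then show ?thesis
      using Cons by simp
  qed
qed simp

definition cands_list :: "('p, 'c, 'v) nme_rule set \<Rightarrow> ('p, 'c, 'v) atomset \<Rightarrow> ('p, 'c, 'v) trigger list" where
  "cands_list S G = (SOME cs. distinct cs \<and> set cs = cands S G)"

lemma distinct_set_cands_list:
  assumes "finite S" "\<forall>R\<in>S. finite (bpos R)" "finite G"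
  shows "distinct (cands_list S G)" "set (cands_list S G) = cands S G"
proof -
  have "\<exists>cs. distinct cs \<and> set cs = cands S G"
    using finite_distinct_list[OF finite_cands[OF assms]] by blast
  then show "distinct (cands_list S G)" "set (cands_list S G) = cands S G"
    unfolding cands_list_def by (metis (mono_tags, lifting) someI_ex)+
qed

primrec bf_run :: "('p, 'c, 'v) criterion \<Rightarrow> ('p, 'c, 'v) nme_rule set \<Rightarrow> ('p, 'c, 'v) atomset
    \<Rightarrow> nat \<Rightarrow> ('p, 'c, 'v) trigger list" where
  "bf_run C S F 0 = []"
| "bf_run C S F (Suc k) = proc C F (bf_run C S F k) (cands_list S (state C F (bf_run C S F k)))"

context
  fixes C :: "('p, 'c, 'v) criterion" and S :: "('p, 'c, 'v) nme_rule set" and F :: "('p, 'c, 'v) atomset"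
  assumes local: "local_crit C" and fin_F: "finite F" and fin_S: "finite S"
    and exist: "\<forall>R\<in>S. exist_rule R"
begin

lemma cands_list_state:
  assumes "productive_der C S F h"
  shows "distinct (cands_list S (state C F h))" "set (cands_list S (state C F h)) = cands S (state C F h)"
  using distinct_set_cands_list[OF fin_S _ finite_state_productive_der[OF fin_F exist assms]] exist
  by (auto simp: exist_rule_def nme_rule_def)

lemma productive_der_bf_run: "productive_der C S F (bf_run C S F k)"
proof (induction k)
  case (Suc k)
  then show ?case
    using productive_der_proc[OF local fin_F exist, of "bf_run C S F k" "[]"] cands_list_state
    by simp
qed simp

lemma chase_run_bf_run: "chase_run C S F (bf_run C S F)"
  unfolding chase_run_def using cands_list_state[OF productive_der_bf_run] by auto

end

lemma complete_der_if_idle: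
  assumes "proc C F h cs = h" "cands (pos ` Rs) (state C F h) \<subseteq> set cs"
  shows "complete_der C Rs F h"
  unfolding complete_der_def
proof (intro ballI impI)
  fix R \<pi> assume "R \<in> Rs" "\<pi> \<in> homs (bpos R) (state C F h)" "\<not> cblk C F h (pos R, \<pi>)"
  moreover from this have "(pos R, \<pi>) \<in> set cs"
    using assms(2) by (auto simp: cands_def)
  ultimately show "state C F (h @ [(pos R, \<pi>)]) \<subseteq> state C F h"
    using proc_idle_redundant[OF assms(1)] by blast
qed

lemma C_finite_imp_complete_der:
  assumes "finite Rs" "\<forall>R\<in>Rs. nme_rule R" "local_crit C" "C_finite C (pos ` Rs)" "finite F"
  shows "\<exists>ts. productive_der C (pos ` Rs) F ts \<and> complete_der C Rs F ts"
proof -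
  let ?S = "pos ` Rs"
  have fin: "finite ?S"
    using assms(1) by simp
  have exist: "\<forall>R\<in>?S. exist_rule R"
    using assms(2) exist_rule_pos by blast
  note productive = productive_der_bf_run[OF assms(3,5) fin exist]
  obtain k where idle: "bf_run C ?S F (Suc k) = bf_run C ?S F k"
    using assms(4,5) chase_run_bf_run[OF assms(3,5) fin exist]
    unfolding C_finite_def chase_halts_def by blast
  let ?ts = "bf_run C ?S F k"
  have "complete_der C Rs F ?ts"
  proof (rule complete_der_if_idle)
    show "proc C F ?ts (cands_list ?S (state C F ?ts)) = ?ts"
      using idle by simp
    show "cands ?S (state C F ?ts) \<subseteq> set (cands_list ?S (state C F ?ts))"
      using cands_list_state(2)[OF assms(3,5) fin exist productive] by simp
  qed
  then show ?thesis
    using productive by blast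
qed

section \<open>Chase trees along a single derivation\<close>

lemma subt_append: "subt t (a @ b) = (case subt t a of None \<Rightarrow> None | Some s \<Rightarrow> subt s b)"
proof (induction a arbitrary: t)
  case (Cons i a)
  then show ?case by (cases t) auto
qed simp

lemma subt_Leaf: "subt Leaf a = Some s \<Longrightarrow> a = [] \<and> s = Leaf"
  by (cases a) auto

lemma leaves_prefix_eq:
  fixes t :: "('p, 'c, 'v) dtree"
  assumes "a \<in> leaves t" "b \<in> leaves t" "take (length a) b = a"
  shows "b = a"
proof -
  obtain c where b: "b = a @ c"
    using assms(3) by (metis append_take_drop_id)
  have "subt (Leaf :: ('p, 'c, 'v) dtree) c = Some Leaf"
    using assms(1,2) subt_append[of t a c] unfolding b leaves_def by simp
  then show ?thesis
    using b subt_Leaf by blast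
qed

lemma leaf_unprovable_or_complete:
  assumes "a \<in> leaves t" "MBT (lab_at C F t a) \<noteq> {}"
  shows "unprovable_br C Rs F t a \<or> complete_br C Rs F t a"
proof (rule disjCI)
  assume "\<not> complete_br C Rs F t a"
  then have "\<not> (\<exists>b\<in>leaves t. length a \<le> length b \<and> take (length a) b = take (length a) a \<and>
      complete_br C Rs F t b \<and> stable_br C Rs F t b)"
    using leaves_prefix_eq[OF assms(1)] by auto
  then show "unprovable_br C Rs F t a"
    unfolding unprovable_br_def using assms(2) by (intro exI[of _ "length a"]) auto
qed

fun spine :: "(('p, 'c, 'v) nme_rule \<times> ('c, 'v) subst) list \<Rightarrow> ('p, 'c, 'v) dtree" where
  "spine [] = Leaf"
| "spine ((R, \<pi>) # xs) = Inner R \<pi> (spine xs # replicate (length (bneg R)) Leaf)"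

definition spine_lab :: "('p, 'c, 'v) criterion \<Rightarrow> ('p, 'c, 'v) atomset
    \<Rightarrow> (('p, 'c, 'v) nme_rule \<times> ('c, 'v) subst) list \<Rightarrow> ('p, 'c, 'v) nlab" where
  "spine_lab C F xs =
     \<lparr>IN = state C F (map (apfst pos) xs), OUT = (\<Union>(R, \<pi>)\<in>set xs. sapply \<pi> ` set (bneg R)),
      MBT = {}, hist = map (apfst pos) xs\<rparr>"

lemma root_lab_eq_spine_lab: "root_lab C F = spine_lab C F []"
  by (simp add: root_lab_def spine_lab_def)

lemma child_lab_spine_lab: "child_lab C F (spine_lab C F xs) R \<pi> 0 = spine_lab C F (xs @ [(R, \<pi>)])"
  by (auto simp: spine_lab_def)

lemma labs_ne: "labs C F l t a \<noteq> []"
  by (cases a) auto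

lemma last_labs_spine_pos:
  "d \<le> length xs \<Longrightarrow>
     last (labs C F (spine_lab C F ys) (spine xs) (replicate d 0)) = spine_lab C F (ys @ take d xs)"
proof (induction xs arbitrary: ys d rule: spine.induct)
  case (2 R \<pi> xs)
  then show ?case
    by (cases d) (auto simp: labs_ne child_lab_spine_lab simp del: child_lab.simps)
qed simp

lemma last_labs_spine_neg:
  "d < length xs \<Longrightarrow> i < length (bneg (fst (xs ! d))) \<Longrightarrow>
     last (labs C F (spine_lab C F ys) (spine xs) (replicate d 0 @ [Suc i])) =
       child_lab C F (spine_lab C F (ys @ take d xs)) (fst (xs ! d)) (snd (xs ! d)) (Suc i)"
proof (induction xs arbitrary: ys d rule: spine.induct)
  case (2 R \<pi> xs)
  then show ?case
    by (cases d) (auto simp: labs_ne child_lab_spine_lab simp del: child_lab.simps)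
qed simp

lemma lab_at_spine:
  "d \<le> length xs \<Longrightarrow> lab_at C F (spine xs) (replicate d 0) = spine_lab C F (take d xs)"
  using last_labs_spine_pos[where ys = "[]"] by (simp add: lab_at_def root_lab_eq_spine_lab)

lemma MBT_lab_at_spine_neg:
  "d < length xs \<Longrightarrow> i < length (bneg (fst (xs ! d))) \<Longrightarrow>
     MBT (lab_at C F (spine xs) (replicate d 0 @ [Suc i])) \<noteq> {}"
  by (simp add: lab_at_def root_lab_eq_spine_lab last_labs_spine_neg[where ys = "[]", simplified])

lemma subt_spine_Inner:
  "subt (spine xs) a = Some (Inner R \<pi> cs) \<Longrightarrow>
     \<exists>d<length xs. a = replicate d 0 \<and> xs ! d = (R, \<pi>) \<and> length cs = Suc (length (bneg R))"
proof (induction xs arbitrary: a rule: spine.induct)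
  case 1
  then show ?case by (auto dest: subt_Leaf)
next
  case (2 R' \<pi>' xs)
  show ?case
  proof (cases a)
    case (Cons i a')
    show ?thesis
    proof (cases i)
      case 0
      then obtain d where "d < length xs" "a' = replicate d 0" "xs ! d = (R, \<pi>)"
          "length cs = Suc (length (bneg R))"
        using 2 Cons by auto
      then show ?thesis
        using Cons 0 by (intro exI[of _ "Suc d"]) auto
    qed (use 2 Cons subt_Leaf in \<open>auto split: if_splits\<close>)
  qed (use 2 in auto)
qed

lemma leaves_spine:
  "a \<in> leaves (spine xs) \<Longrightarrow> a = replicate (length xs) 0 \<or>
     (\<exists>d<length xs. \<exists>i<length (bneg (fst (xs ! d))). a = replicate d 0 @ [Suc i])"
proof (induction xs arbitrary: a rule: spine.induct)
  case 1
  then show ?case using subt_Leaf by (auto simp: leaves_def)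
next
  case (2 R \<pi> xs)
  show ?case
  proof (cases a)
    case (Cons i a')
    show ?thesis
    proof (cases i)
      case 0
      then have "a' = replicate (length xs) 0 \<or>
          (\<exists>d<length xs. \<exists>i<length (bneg (fst (xs ! d))). a' = replicate d 0 @ [Suc i])"
        using 2 Cons by (auto simp: leaves_def)
      then show ?thesis
      proof
        assume "\<exists>d<length xs. \<exists>i<length (bneg (fst (xs ! d))). a' = replicate d 0 @ [Suc i]"
        then obtain d j where "d < length xs" "j < length (bneg (fst (xs ! d)))"
            "a' = replicate d 0 @ [Suc j]"
          by blast
        then show ?thesis
          using Cons 0 by (intro disjI2 exI[of _ "Suc d"]) auto
      qed (use Cons 0 in simp)
    next
      case (Suc j)
      then have "j < length (bneg R)" "a' = []"
        using 2 Cons by (auto simp: leaves_def split: if_splits dest: subt_Leaf)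
      then show ?thesis
        using Cons Suc by (intro disjI2 exI[of _ 0]) auto
    qed
  qed (use 2 in \<open>auto simp: leaves_def\<close>)
qed

lemma wf_dtree_spine:
  assumes "productive_der C (pos ` Rs) F (map (apfst pos) xs)" "fst ` set xs \<subseteq> Rs"
    and "\<forall>d<length xs. \<not> unsound (spine_lab C F (take d xs))"
  shows "wf_dtree C Rs F (spine xs)"
  unfolding wf_dtree_def
proof (intro allI impI)
  fix a R \<pi> cs
  assume "subt (spine xs) a = Some (Inner R \<pi> cs)"
  then obtain d where d: "d < length xs" "a = replicate d 0" "xs ! d = (R, \<pi>)"
      "length cs = Suc (length (bneg R))"
    using subt_spine_Inner by blast
  have lab: "lab_at C F (spine xs) a = spine_lab C F (take d xs)"
    using d(1,2) lab_at_spine[of d xs] by simp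
  have "R \<in> Rs"
    using assms(2) d(1,3) by (metis fst_conv image_subset_iff nth_mem)
  moreover have "productive_trigger C (pos ` Rs) F (map (apfst pos) (take d xs)) (pos R, \<pi>)"
  proof -
    have "apfst pos (xs ! d) = (pos R, \<pi>)"
      using d(3) by simp
    then show ?thesis
      using assms(1) d(1) unfolding productive_der_def by (auto simp: take_map)
  qed
  ultimately show "let l = lab_at C F (spine xs) a in
      R \<in> Rs \<and> \<pi> \<in> homs (bpos R) (IN l) \<and> \<not> unsound l \<and>
      \<not> cblk C F (hist l) (pos R, \<pi>) \<and>
      \<not> state C F (hist l @ [(pos R, \<pi>)]) \<subseteq> IN l \<and>
      length cs = Suc (length (bneg R))"
    using lab assms(3) d(1,4) by (simp add: spine_lab_def productive_trigger_def)
qed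

lemma unsound_br_spine:
  "unsound_br C F (spine xs) (replicate (length xs) 0) \<longleftrightarrow>
     (\<exists>d\<le>length xs. unsound (spine_lab C F (take d xs)))"
  by (auto simp: unsound_br_def lab_at_spine min_def)

lemma ex_lift_apfst: "fst ` set ys \<subseteq> f ` A \<Longrightarrow> \<exists>xs. map (apfst f) xs = ys \<and> fst ` set xs \<subseteq> A"
proof (induction ys)
  case (Cons y ys)
  then obtain x xs where "x \<in> A" "f x = fst y" "map (apfst f) xs = ys" "fst ` set xs \<subseteq> A"
    by auto
  then show ?case
    by (intro exI[of _ "(x, snd y) # xs"]) auto
qed simp

lemma unsound_or_complete_br_spine:
  assumes "complete_der C Rs F (map (apfst pos) xs)"
  shows "unsound_br C F (spine xs) (replicate (length xs) 0) \<or>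
    complete_br C Rs F (spine xs) (replicate (length xs) 0)"
  using assms lab_at_spine[of "length xs" xs C F] by (simp add: complete_br_def spine_lab_def)

lemma chase_tree_spine:
  assumes "productive_der C (pos ` Rs) F (map (apfst pos) xs)" "fst ` set xs \<subseteq> Rs"
    and "\<forall>d<length xs. \<not> unsound (spine_lab C F (take d xs))"
    and "unsound_br C F (spine xs) (replicate (length xs) 0) \<or>
      complete_br C Rs F (spine xs) (replicate (length xs) 0)"
  shows "chase_tree C Rs F (spine xs)"
  unfolding chase_tree_def
proof (intro conjI ballI)
  show "wf_dtree C Rs F (spine xs)"
    using wf_dtree_spine[OF assms(1-3)] .
next
  fix a assume a: "a \<in> leaves (spine xs)"
  from leaves_spine[OF a]
  show "unsound_br C F (spine xs) a \<or> unprovable_br C Rs F (spine xs) a \<or> complete_br C Rs F (spine xs) a"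
  proof
    assume "\<exists>d<length xs. \<exists>i<length (bneg (fst (xs ! d))). a = replicate d 0 @ [Suc i]"
    then have "MBT (lab_at C F (spine xs) a) \<noteq> {}"
      using MBT_lab_at_spine_neg by blast
    then show ?thesis
      using leaf_unprovable_or_complete[OF a] by blast
  qed (use assms(4) in blast)
qed

lemma ex_chase_tree_if_complete_der:
  assumes "productive_der C (pos ` Rs) F ts" "complete_der C Rs F ts"
  shows "\<exists>t. chase_tree C Rs F t"
proof -
  obtain xs where ts: "map (apfst pos) xs = ts" and rules: "fst ` set xs \<subseteq> Rs"
    using ex_lift_apfst[OF productive_der_rules[OF assms(1)]] by blast
  let ?unsound = "\<lambda>d. unsound (spine_lab C F (take d xs))"
  obtain n where n: "n \<le> length xs" "\<forall>d<n. \<not> ?unsound d" "?unsound n \<or> n = length xs"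
    using ex_least_nat_le[of "\<lambda>d. ?unsound d \<or> d = length xs" "length xs"] by auto
  let ?xs = "take n xs"
  have "unsound_br C F (spine ?xs) (replicate (length ?xs) 0) \<or>
      complete_br C Rs F (spine ?xs) (replicate (length ?xs) 0)"
  proof (cases "?unsound n")
    case True
    then show ?thesis
      using n(1) unsound_br_spine[of C F ?xs] by auto
  next
    case False
    then show ?thesis
      using n(3) ts assms(2) unsound_or_complete_br_spine[of C Rs F xs] by simp
  qed
  moreover have "productive_der C (pos ` Rs) F (map (apfst pos) ?xs)"
    using productive_der_take[OF assms(1), of n] ts by (metis take_map)
  moreover have "fst ` set ?xs \<subseteq> Rs"
    using rules set_take_subset by (metis image_mono order_trans)
  ultimately have "chase_tree C Rs F (spine ?xs)"
    using n(1,2) by (intro chase_tree_spine) auto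
  then show ?thesis ..
qed

theorem mainTheorem13:
  fixes Rs :: "('p, 'c, 'v::infinite) nme_rule set"
    and C :: "('p, 'c, 'v) criterion"
  assumes "finite Rs"
    and "\<forall>R\<in>Rs. nme_rule R"
    and "chase_criterion C"
    and "local_crit C"
    and "C_finite C (pos ` Rs)"
  shows "C_stable_finite C Rs"
  unfolding C_stable_finite_def
proof (intro allI impI)
  fix F :: "('p, 'c, 'v) atomset"
  assume "finite F"
  then obtain ts where "productive_der C (pos ` Rs) F ts" "complete_der C Rs F ts"
    using C_finite_imp_complete_der[OF assms(1,2,4,5)] by blast
  then show "\<exists>t. chase_tree C Rs F t"
    by (rule ex_chase_tree_if_complete_der)
qed

end
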